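(* Let $n\ge 1$ and $1\le p\le k\le n$. The number $F(n;p,k)$ of $\alpha\in\mathcal{ORCT}_n$ with $h(\alpha)=p$ and $w^+(\alpha)=k$ equals $2\binom{n-1}{p-1}$ if $p>1$, and equals $1$ if $p=1$.
   Context: $X_n=\{1,2,\dots,n\}$ with its usual order; maps are written on the right ($x\alpha$). A map $\alpha:X_n\to X_n$ is order-preserving if $x\le y$ implies $x\alpha\le y\alpha$, order-reversing if $x\le y$ implies $x\alpha\ge y\alpha$, and a contraction if $|x\alpha-y\alpha|\le|x-y|$ for all $x,y$. $\mathcal{ORCT}_n$ is the set of all maps $X_n\to X_n$ (defined on all of $X_n$) that are contractions and are either order-preserving or order-reversing. Height $h(\alpha)=|\mathrm{Im}\,\alpha|$; right waist $w^+(\alpha)=\max(\mathrm{Im}\,\alpha)$. *)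

theory Defs
  imports "HOL-Library.FuncSet"
begin

text \<open>Maps X_n -> X_n with X_n = {1..n}, represented as extensional functions
  (value undefined outside {1..n}), i.e. elements of {1..n} ->E {1..n}.\<close>

definition Xn :: "nat \<Rightarrow> nat set" where
  "Xn n = {1..n}"

definition order_preserving :: "nat \<Rightarrow> (nat \<Rightarrow> nat) \<Rightarrow> bool" where
  "order_preserving n f \<longleftrightarrow> (\<forall>x\<in>Xn n. \<forall>y\<in>Xn n. x \<le> y \<longrightarrow> f x \<le> f y)"

definition order_reversing :: "nat \<Rightarrow> (nat \<Rightarrow> nat) \<Rightarrow> bool" where
  "order_reversing n f \<longleftrightarrow> (\<forall>x\<in>Xn n. \<forall>y\<in>Xn n. x \<le> y \<longrightarrow> f x \<ge> f y)"

definition contraction :: "nat \<Rightarrow> (nat \<Rightarrow> nat) \<Rightarrow> bool" where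
  "contraction n f \<longleftrightarrow>
     (\<forall>x\<in>Xn n. \<forall>y\<in>Xn n. \<bar>int (f x) - int (f y)\<bar> \<le> \<bar>int x - int y\<bar>)"

definition ORCT :: "nat \<Rightarrow> (nat \<Rightarrow> nat) set" where
  "ORCT n = {f \<in> Xn n \<rightarrow>\<^sub>E Xn n. contraction n f \<and> (order_preserving n f \<or> order_reversing n f)}"

definition height :: "nat \<Rightarrow> (nat \<Rightarrow> nat) \<Rightarrow> nat" where
  "height n f = card (f ` Xn n)"

definition right_waist :: "nat \<Rightarrow> (nat \<Rightarrow> nat) \<Rightarrow> nat" where
  "right_waist n f = Max (f ` Xn n)"

definition F :: "nat \<Rightarrow> nat \<Rightarrow> nat \<Rightarrow> nat" where
  "F n p k = card {f \<in> ORCT n. height n f = p \<and> right_waist n f = k}"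

end

theory Submission
  imports Defs
begin

text \<open>An order-preserving contraction of \<open>{1..n}\<close> moves by 0 or 1 at each step, so it is
  determined by its value at 1 and its set of ascents \<open>{x. f (x+1) = f x + 1}\<close>; its image is the
  interval from \<open>f 1\<close> to \<open>f 1 + #ascents\<close>. Prescribing height \<open>p\<close> and right waist \<open>k\<close> thus fixes
  \<open>f 1 = k + 1 - p\<close> and leaves an arbitrary \<open>(p-1)\<close>-subset of \<open>{1..n-1}\<close> as ascent set.
  Reflecting the domain exchanges order-preserving and order-reversing maps without changing the
  image; the two classes overlap exactly in the constant maps, i.e. in height 1.\<close>

definition count_below :: "nat set \<Rightarrow> nat \<Rightarrow> nat" where
  "count_below S x = card {y\<in>S. y < x}"

lemma finite_below: "finite {y\<in>S. y < (x::nat)}"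
  by (rule finite_subset[of _ "{..<x}"]) auto

lemma count_below_Suc: "count_below S (Suc x) = count_below S x + (if x \<in> S then 1 else 0)"
proof -
  have "{y\<in>S. y < Suc x} = (if x \<in> S then insert x {y\<in>S. y < x} else {y\<in>S. y < x})"
    by (auto simp: less_Suc_eq)
  then show ?thesis by (simp add: count_below_def finite_below)
qed

lemma count_below_mono: "x \<le> y \<Longrightarrow> count_below S x \<le> count_below S y"
  unfolding count_below_def by (rule card_mono[OF finite_below]) auto

lemma count_below_le_add_diff: "x \<le> y \<Longrightarrow> count_below S y \<le> count_below S x + (y - x)"
  by (induction rule: dec_induct) (auto simp: count_below_Suc)

lemma count_below_le_card: "finite S \<Longrightarrow> count_below S x \<le> card S"
  unfolding count_below_def by (rule card_mono) auto

lemma count_below_eq_card: "S \<subseteq> {..<x} \<Longrightarrow> count_below S x = card S"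
  unfolding count_below_def by (rule arg_cong[where f = card]) auto

lemma count_below_Suc_0:
  assumes "0 \<notin> S"
  shows "count_below S (Suc 0) = 0"
proof -
  have "{y\<in>S. y < Suc 0} = {}"
    using assms by auto
  then show ?thesis
    by (simp add: count_below_def)
qed

lemma image_atLeastAtMost_unit_steps:
  fixes h :: "nat \<Rightarrow> nat"
  assumes "a \<le> b"
    and steps: "\<And>x. a \<le> x \<Longrightarrow> x < b \<Longrightarrow> h x \<le> h (Suc x) \<and> h (Suc x) \<le> Suc (h x)"
  shows "h ` {a..b} = {h a..h b}"
  using assms(1)
proof (induction rule: dec_induct)
  case base
  show ?case by simp
next
  case (step m)
  have "h m \<in> h ` {a..m}"
    using step.hyps(1) by simp
  then have "h a \<le> h m"
    by (simp add: step.IH)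
  have "h ` {a..Suc m} = insert (h (Suc m)) {h a..h m}"
    using step.hyps(1) step.IH by (simp add: atLeastAtMostSuc_conv)
  also have "\<dots> = {h a..h (Suc m)}"
  proof -
    have "h (Suc m) = h m \<or> h (Suc m) = Suc (h m)"
      using steps[of m] step.hyps by linarith
    then show ?thesis
      using \<open>h a \<le> h m\<close> by (auto simp: atLeastAtMostSuc_conv)
  qed
  finally show ?case .
qed

lemma finite_ORCT: "finite (ORCT n)"
  by (rule finite_subset[of _ "Xn n \<rightarrow>\<^sub>E Xn n"]) (auto simp: ORCT_def Xn_def intro: finite_PiE)

lemma ORCT_in_PiE: "f \<in> ORCT n \<Longrightarrow> f \<in> Xn n \<rightarrow>\<^sub>E Xn n"
  by (simp add: ORCT_def)

lemma order_preserving_and_reversing_iff_height_le_1: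
  "order_preserving n f \<and> order_reversing n f \<longleftrightarrow> height n f \<le> 1"
proof -
  have "finite (f ` Xn n)"
    by (simp add: Xn_def)
  then have "height n f \<le> 1 \<longleftrightarrow> (\<forall>a\<in>f ` Xn n. \<forall>b\<in>f ` Xn n. a = b)"
    unfolding height_def by (simp add: card_le_Suc0_iff_eq)
  also have "\<dots> \<longleftrightarrow> (\<forall>x\<in>Xn n. \<forall>y\<in>Xn n. f x = f y)"
    by simp
  also have "\<dots> \<longleftrightarrow> order_preserving n f \<and> order_reversing n f"
  proof
    assume "\<forall>x\<in>Xn n. \<forall>y\<in>Xn n. f x = f y"
    then show "order_preserving n f \<and> order_reversing n f"
      unfolding order_preserving_def order_reversing_def by (metis order_refl)
  next
    assume "order_preserving n f \<and> order_reversing n f"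
    then have "f x = f y" if "x \<in> Xn n" "y \<in> Xn n" "x \<le> y" for x y
      using that unfolding order_preserving_def order_reversing_def by (simp add: antisym)
    then show "\<forall>x\<in>Xn n. \<forall>y\<in>Xn n. f x = f y"
      using nat_le_linear by metis
  qed
  finally show ?thesis ..
qed

subsection \<open>Order-preserving contractions\<close>

definition ascents :: "nat \<Rightarrow> (nat \<Rightarrow> nat) \<Rightarrow> nat set" where
  "ascents n f = {x\<in>{1..<n}. f (Suc x) = Suc (f x)}"

definition staircase :: "nat \<Rightarrow> nat \<Rightarrow> nat set \<Rightarrow> nat \<Rightarrow> nat" where
  "staircase n a S = (\<lambda>x. if x \<in> Xn n then a + count_below S x else undefined)"

lemma ascents_subset: "ascents n f \<subseteq> {1..<n}"
  by (auto simp: ascents_def)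

lemma order_preserving_contraction_step:
  assumes "contraction n f" "order_preserving n f" "1 \<le> x" "x < n"
  shows "f x \<le> f (Suc x) \<and> f (Suc x) \<le> Suc (f x)"
proof -
  have x: "x \<in> Xn n" "Suc x \<in> Xn n"
    using assms(3,4) by (auto simp: Xn_def)
  then have "f x \<le> f (Suc x)"
    using assms(2) unfolding order_preserving_def by auto
  moreover have "\<bar>int (f x) - int (f (Suc x))\<bar> \<le> \<bar>int x - int (Suc x)\<bar>"
    using assms(1) x unfolding contraction_def by blast
  ultimately show ?thesis by simp
qed

lemma order_preserving_contraction_eq:
  assumes "contraction n f" "order_preserving n f" "1 \<le> x" "x \<le> n"
  shows "f x = f 1 + count_below (ascents n f) x"
  using assms(3,4)
proof (induction rule: dec_induct)
  case base
  show ?case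
    using count_below_Suc_0[of "ascents n f"] ascents_subset by force
next
  case (step m)
  then show ?case
    using order_preserving_contraction_step[OF assms(1,2), of m]
    by (auto simp: count_below_Suc ascents_def)
qed

lemma order_preserving_contraction_image:
  assumes "contraction n f" "order_preserving n f" "1 \<le> n"
  shows "f ` Xn n = {f 1..f 1 + card (ascents n f)}"
proof -
  have "f ` Xn n = {f 1..f n}"
    unfolding Xn_def
    using assms(3) order_preserving_contraction_step[OF assms(1,2)]
    by (rule image_atLeastAtMost_unit_steps)
  also have "f n = f 1 + count_below (ascents n f) n"
    using order_preserving_contraction_eq[OF assms(1,2) assms(3) order_refl] .
  also have "count_below (ascents n f) n = card (ascents n f)"
    using ascents_subset[of n f] by (intro count_below_eq_card) auto
  finally show ?thesis .
qed

lemma height_right_waist_order_preserving_contraction: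
  assumes "contraction n f" "order_preserving n f" "1 \<le> n"
  shows "height n f = Suc (card (ascents n f))"
    and "right_waist n f = f 1 + card (ascents n f)"
  unfolding height_def right_waist_def order_preserving_contraction_image[OF assms]
  by (simp, rule Max_eqI) auto

lemma staircase_ascents:
  assumes "f \<in> ORCT n" "order_preserving n f"
  shows "staircase n (f 1) (ascents n f) = f"
proof
  fix x
  show "staircase n (f 1) (ascents n f) x = f x"
  proof (cases "x \<in> Xn n")
    case True
    have "contraction n f"
      using assms(1) by (simp add: ORCT_def)
    moreover have "1 \<le> x" "x \<le> n"
      using True by (simp_all add: Xn_def)
    ultimately have "f x = f 1 + count_below (ascents n f) x"
      using order_preserving_contraction_eq[OF _ assms(2)] by blast
    with True show ?thesis
      by (simp add: staircase_def)
  next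
    case False
    then show ?thesis
      using PiE_arb[OF ORCT_in_PiE[OF assms(1)]] by (simp add: staircase_def)
  qed
qed

lemma staircase_monotone_contracting:
  assumes "x \<in> Xn n" "y \<in> Xn n" "x \<le> y"
  shows "staircase n a S x \<le> staircase n a S y"
    and "staircase n a S y \<le> staircase n a S x + (y - x)"
  using assms count_below_mono[OF assms(3), of S] count_below_le_add_diff[OF assms(3), of S]
  by (simp_all add: staircase_def)

lemma staircase_in_ORCT:
  assumes "S \<subseteq> {1..<n}" "1 \<le> a" "a + card S \<le> n"
  shows "staircase n a S \<in> ORCT n" and "order_preserving n (staircase n a S)"
proof -
  let ?g = "staircase n a S"
  have "count_below S x \<le> card S" for x
    using assms(1) by (intro count_below_le_card) (auto intro: finite_subset)
  then have "a + count_below S x \<in> Xn n" for x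
    using assms(2,3) by (simp add: Xn_def) (meson add_left_mono le_trans)
  then have "?g \<in> Xn n \<rightarrow>\<^sub>E Xn n"
    by (intro PiE_I) (simp_all add: staircase_def)
  moreover have "contraction n ?g"
    unfolding contraction_def
  proof (intro ballI)
    fix x y assume "x \<in> Xn n" "y \<in> Xn n"
    then show "\<bar>int (?g x) - int (?g y)\<bar> \<le> \<bar>int x - int y\<bar>"
      using staircase_monotone_contracting[of x n y a S] staircase_monotone_contracting[of y n x a S]
      by (cases "x \<le> y") linarith+
  qed
  moreover show "order_preserving n ?g"
    unfolding order_preserving_def using staircase_monotone_contracting(1) by blast
  ultimately show "?g \<in> ORCT n"
    by (simp add: ORCT_def)
qed

lemma ascents_staircase:
  assumes "S \<subseteq> {1..<n}"
  shows "ascents n (staircase n a S) = S"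
proof -
  have step: "staircase n a S (Suc x) = staircase n a S x + (if x \<in> S then 1 else 0)"
    if "1 \<le> x" "x < n" for x
    using that by (simp add: staircase_def Xn_def count_below_Suc)
  show ?thesis
  proof (rule set_eqI)
    fix x
    show "x \<in> ascents n (staircase n a S) \<longleftrightarrow> x \<in> S"
    proof (cases "1 \<le> x \<and> x < n")
      case True
      then show ?thesis
        using step[of x] by (simp add: ascents_def)
    next
      case False
      then show ?thesis
        using assms by (auto simp: ascents_def)
    qed
  qed
qed

lemma card_ascents_and_initial_value:
  assumes "f \<in> ORCT n" "order_preserving n f" "height n f = p" "right_waist n f = k" "1 \<le> n"
  shows "card (ascents n f) = p - 1" and "f 1 = k + 1 - p"
proof -
  have "contraction n f"
    using assms(1) by (simp add: ORCT_def)
  then show "card (ascents n f) = p - 1" "f 1 = k + 1 - p"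
    using height_right_waist_order_preserving_contraction[of n f] assms(2-5) by simp_all
qed

lemma bij_betw_ascents:
  assumes "1 \<le> p" "p \<le> k" "k \<le> n"
  shows "bij_betw (ascents n)
           {f \<in> ORCT n. order_preserving n f \<and> height n f = p \<and> right_waist n f = k}
           {S. S \<subseteq> {1..<n} \<and> card S = p - 1}"
proof (rule bij_betw_byWitness[where f' = "staircase n (k + 1 - p)"])
  have n: "1 \<le> n"
    using assms by simp
  show "\<forall>f\<in>{f \<in> ORCT n. order_preserving n f \<and> height n f = p \<and> right_waist n f = k}.
          staircase n (k + 1 - p) (ascents n f) = f"
    using staircase_ascents card_ascents_and_initial_value(2)[OF _ _ _ _ n] by fastforce
  show "ascents n ` {f \<in> ORCT n. order_preserving n f \<and> height n f = p \<and> right_waist n f = k}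
          \<subseteq> {S. S \<subseteq> {1..<n} \<and> card S = p - 1}"
    using ascents_subset card_ascents_and_initial_value(1)[OF _ _ _ _ n] by blast
  show "\<forall>S\<in>{S. S \<subseteq> {1..<n} \<and> card S = p - 1}. ascents n (staircase n (k + 1 - p) S) = S"
    using ascents_staircase by blast
  show "staircase n (k + 1 - p) ` {S. S \<subseteq> {1..<n} \<and> card S = p - 1}
          \<subseteq> {f \<in> ORCT n. order_preserving n f \<and> height n f = p \<and> right_waist n f = k}"
  proof clarify
    fix S assume S: "S \<subseteq> {1..<n}" "card S = p - 1"
    let ?g = "staircase n (k + 1 - p) S"
    have g: "?g \<in> ORCT n" "order_preserving n ?g"
      using staircase_in_ORCT[OF S(1)] S(2) assms by simp_all
    have "0 \<notin> S"
      using S(1) by auto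
    then have "?g 1 = k + 1 - p"
      using n by (simp add: staircase_def Xn_def count_below_Suc_0)
    moreover have "contraction n ?g"
      using g(1) by (simp add: ORCT_def)
    ultimately show "?g \<in> ORCT n \<and> order_preserving n ?g \<and> height n ?g = p \<and> right_waist n ?g = k"
      using g height_right_waist_order_preserving_contraction[of n ?g] n
        ascents_staircase[OF S(1)] S(2) assms
      by simp
  qed
qed

lemma card_order_preserving_ORCT:
  assumes "1 \<le> p" "p \<le> k" "k \<le> n"
  shows "card {f \<in> ORCT n. order_preserving n f \<and> height n f = p \<and> right_waist n f = k}
           = (n - 1) choose (p - 1)"
  using bij_betw_same_card[OF bij_betw_ascents[OF assms]] n_subsets[of "{1..<n}" "p - 1"]
  by simp

subsection \<open>Reflection of the domain\<close>

definition reflect :: "nat \<Rightarrow> (nat \<Rightarrow> nat) \<Rightarrow> nat \<Rightarrow> nat" where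
  "reflect n f = (\<lambda>x. if x \<in> Xn n then f (Suc n - x) else undefined)"

lemma reflect_apply: "x \<in> Xn n \<Longrightarrow> reflect n f x = f (Suc n - x)"
  by (simp add: reflect_def)

lemma reflect_point_in_Xn: "x \<in> Xn n \<Longrightarrow> Suc n - x \<in> Xn n"
  by (auto simp: Xn_def)

lemma image_reflect_point: "(\<lambda>x. Suc n - x) ` Xn n = Xn n"
proof
  show "(\<lambda>x. Suc n - x) ` Xn n \<subseteq> Xn n"
    using reflect_point_in_Xn by blast
  show "Xn n \<subseteq> (\<lambda>x. Suc n - x) ` Xn n"
  proof
    fix y assume y: "y \<in> Xn n"
    then have "y = Suc n - (Suc n - y)"
      by (auto simp: Xn_def)
    with reflect_point_in_Xn[OF y] show "y \<in> (\<lambda>x. Suc n - x) ` Xn n"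
      by blast
  qed
qed

lemma image_reflect: "reflect n f ` Xn n = f ` Xn n"
proof -
  have "reflect n f ` Xn n = (\<lambda>x. f (Suc n - x)) ` Xn n"
    by (rule image_cong) (simp_all add: reflect_apply)
  also have "\<dots> = f ` (\<lambda>x. Suc n - x) ` Xn n"
    by (simp only: image_image)
  finally show ?thesis
    by (simp only: image_reflect_point)
qed

lemma reflect_reflect:
  assumes "f \<in> Xn n \<rightarrow>\<^sub>E Xn n"
  shows "reflect n (reflect n f) = f"
proof
  fix x
  show "reflect n (reflect n f) x = f x"
  proof (cases "x \<in> Xn n")
    case True
    then have "Suc n - (Suc n - x) = x"
      by (simp add: Xn_def)
    with True show ?thesis
      by (simp add: reflect_apply reflect_point_in_Xn)
  next
    case False
    then show ?thesis
      using PiE_arb[OF assms False] by (simp add: reflect_def)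
  qed
qed

lemma contraction_reflect: "contraction n f \<Longrightarrow> contraction n (reflect n f)"
  unfolding contraction_def
proof (intro ballI)
  fix x y assume f: "\<forall>x\<in>Xn n. \<forall>y\<in>Xn n. \<bar>int (f x) - int (f y)\<bar> \<le> \<bar>int x - int y\<bar>"
    and x: "x \<in> Xn n" and y: "y \<in> Xn n"
  have "\<bar>int (f (Suc n - x)) - int (f (Suc n - y))\<bar> \<le> \<bar>int (Suc n - x) - int (Suc n - y)\<bar>"
    using f reflect_point_in_Xn[OF x] reflect_point_in_Xn[OF y] by blast
  also have "\<bar>int (Suc n - x) - int (Suc n - y)\<bar> = \<bar>int x - int y\<bar>"
    using x y by (auto simp: Xn_def)
  finally show "\<bar>int (reflect n f x) - int (reflect n f y)\<bar> \<le> \<bar>int x - int y\<bar>"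
    by (simp add: reflect_apply x y)
qed

lemma order_preserving_reflect: "order_reversing n f \<Longrightarrow> order_preserving n (reflect n f)"
  unfolding order_preserving_def order_reversing_def
  by (simp add: reflect_apply reflect_point_in_Xn)

lemma order_reversing_reflect: "order_preserving n f \<Longrightarrow> order_reversing n (reflect n f)"
  unfolding order_preserving_def order_reversing_def
  by (simp add: reflect_apply reflect_point_in_Xn)

lemma reflect_in_PiE:
  assumes "f \<in> Xn n \<rightarrow>\<^sub>E Xn n"
  shows "reflect n f \<in> Xn n \<rightarrow>\<^sub>E Xn n"
proof (rule PiE_I)
  fix x assume "x \<in> Xn n"
  then show "reflect n f x \<in> Xn n"
    using PiE_mem[OF assms reflect_point_in_Xn] by (simp add: reflect_apply)
next
  fix x assume "x \<notin> Xn n"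
  then show "reflect n f x = undefined"
    by (simp add: reflect_def)
qed

lemma reflect_in_ORCT: "f \<in> ORCT n \<Longrightarrow> reflect n f \<in> ORCT n"
  unfolding ORCT_def
  using reflect_in_PiE contraction_reflect order_preserving_reflect order_reversing_reflect
  by blast

lemma bij_betw_reflect:
  "bij_betw (reflect n)
     {f \<in> ORCT n. order_reversing n f \<and> height n f = p \<and> right_waist n f = k}
     {f \<in> ORCT n. order_preserving n f \<and> height n f = p \<and> right_waist n f = k}"
proof (rule bij_betw_byWitness[where f' = "reflect n"])
  have "reflect n f \<in> ORCT n \<and> height n (reflect n f) = height n f
          \<and> right_waist n (reflect n f) = right_waist n f" if "f \<in> ORCT n" for f
    using that reflect_in_ORCT by (simp add: height_def right_waist_def image_reflect)
  then show "reflect n ` {f \<in> ORCT n. order_reversing n f \<and> height n f = p \<and> right_waist n f = k}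
          \<subseteq> {f \<in> ORCT n. order_preserving n f \<and> height n f = p \<and> right_waist n f = k}"
    and "reflect n ` {f \<in> ORCT n. order_preserving n f \<and> height n f = p \<and> right_waist n f = k}
          \<subseteq> {f \<in> ORCT n. order_reversing n f \<and> height n f = p \<and> right_waist n f = k}"
    using order_preserving_reflect order_reversing_reflect by auto
qed (auto simp: reflect_reflect ORCT_in_PiE)

theorem proposition3p3:
  fixes n p k :: nat
  assumes "1 \<le> n" and "1 \<le> p" and "p \<le> k" and "k \<le> n"
  shows "F n p k = (if p > 1 then 2 * ((n - 1) choose (p - 1)) else 1)"
proof -
  let ?A = "\<lambda>P. {f \<in> ORCT n. P n f \<and> height n f = p \<and> right_waist n f = k}"
  have F: "F n p k = card (?A order_preserving \<union> ?A order_reversing)"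
    unfolding F_def by (rule arg_cong[where f = card]) (auto simp: ORCT_def)
  have preserving: "card (?A order_preserving) = (n - 1) choose (p - 1)"
    using card_order_preserving_ORCT assms(2-4) .
  have reversing: "card (?A order_reversing) = card (?A order_preserving)"
    by (rule bij_betw_same_card[OF bij_betw_reflect])
  show ?thesis
  proof (cases "p = 1")
    case True
    have "order_preserving n f" if "height n f = 1" for f
      using that order_preserving_and_reversing_iff_height_le_1[of n f] by simp
    with True have "?A order_reversing \<subseteq> ?A order_preserving"
      by blast
    then show ?thesis
      using F preserving True by (simp add: Un_absorb2)
  next
    case False
    have "\<not> (order_preserving n f \<and> order_reversing n f)" if "height n f = p" for f
      using that False assms(2) order_preserving_and_reversing_iff_height_le_1[of n f] by simp
    then have "?A order_preserving \<inter> ?A order_reversing = {}"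
      by blast
    then show ?thesis
      using F preserving reversing False assms(2) finite_ORCT by (simp add: card_Un_disjoint)
  qed
qed

end
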